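(* For the name-generation monad $T$ on $[\mathsf{Inj},\mathsf{Set}]$, an object $X$ is sober if and only if it is a nominal set (i.e. the functor $X:\mathsf{Inj}\to\mathsf{Set}$ preserves pullbacks), and the associated sobrification monad $D$ is idempotent.
   Context: $\mathsf{Inj}$ is the category of finite sets and injections. $(TX)(a)=\operatorname{colim}_{b\in\mathsf{Inj}}X(a+b)$, with unit induced by $b=\emptyset$ and multiplication induced by $(a+b)+c\cong a+(b+c)$; a commutative monad on $[\mathsf{Inj},\mathsf{Set}]$. An object $X$ is sober for $T$ if $\eta_X:X\to TX$ is an equalizer of $\eta_{TX},T\eta_X:TX\to TTX$. $\theta_X:DX\to TX$ denotes the equalizer of $\eta_{TX},T\eta_X$; $D$ is a monad with $Dg$ the unique map with $\theta_Z\circ Dg=Tg\circ\theta_Y$, unit $e_X$ with $\theta_X\circ e_X=\eta_X$, and multiplication $m_X$ with $\theta_X\circ m_X=\mu_X\circ T\theta_X\circ\theta_{DX}$; idempotent means the multiplication is an isomorphism. *)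

theory Defs
  imports Main
begin

text \<open>The skeleton of Inj: the object n stands for the finite set {0..<n};
  a morphism n \<rightarrow> m is (represented by) a function f :: nat \<Rightarrow> nat that is
  injective on {..<n} and maps {..<n} into {..<m}; two representatives are
  the same morphism iff they agree on {..<n}.
  Coproduct a + b is the natural number a + b, with a embedded as {..<a}
  and b as {a..<a+b}; hence (a+b)+c = a+(b+c) on the nose.\<close>

definition injm :: "nat \<Rightarrow> nat \<Rightarrow> (nat \<Rightarrow> nat) \<Rightarrow> bool" where
  "injm n m f \<longleftrightarrow> inj_on f {..<n} \<and> f ` {..<n} \<subseteq> {..<m}"

text \<open>A functor Inj \<rightarrow> Set with values in subsets of a type 'a:
  object part and action (act n m f x = X(f)(x) for f : n \<rightarrow> m).\<close>
type_synonym 'a psh = "(nat \<Rightarrow> 'a set) \<times> (nat \<Rightarrow> nat \<Rightarrow> (nat \<Rightarrow> nat) \<Rightarrow> 'a \<Rightarrow> 'a)"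

definition is_inj_functor :: "'a psh \<Rightarrow> bool" where
  "is_inj_functor X \<longleftrightarrow>
     (\<forall>n m f x. injm n m f \<longrightarrow> x \<in> fst X n \<longrightarrow> snd X n m f x \<in> fst X m) \<and>
     (\<forall>n x. x \<in> fst X n \<longrightarrow> snd X n n id x = x) \<and>
     (\<forall>n m p f g x. injm n m f \<longrightarrow> injm m p g \<longrightarrow> x \<in> fst X n \<longrightarrow>
        snd X n p (g \<circ> f) x = snd X m p g (snd X n m f x)) \<and>
     (\<forall>n m f g x. injm n m f \<longrightarrow> (\<forall>k<n. f k = g k) \<longrightarrow> x \<in> fst X n \<longrightarrow>
        snd X n m f x = snd X n m g x)"

text \<open>id_a + f : a+b \<rightarrow> a+b'  and  f + id_b : a+b \<rightarrow> a'+b\<close>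
definition plus_r :: "nat \<Rightarrow> (nat \<Rightarrow> nat) \<Rightarrow> nat \<Rightarrow> nat" where
  "plus_r a f = (\<lambda>k. if k < a then k else a + f (k - a))"

definition plus_l :: "nat \<Rightarrow> nat \<Rightarrow> (nat \<Rightarrow> nat) \<Rightarrow> nat \<Rightarrow> nat" where
  "plus_l a a' f = (\<lambda>k. if k < a then f k else a' + (k - a))"

text \<open>Colimit over b \<in> Inj of X(a+b): pairs (b,x) with x \<in> X(a+b), modulo the
  equivalence relation generated by (b,x) ~ (b', X(id_a+f) x) for f : b \<rightarrow> b'.\<close>
definition Tstep :: "'a psh \<Rightarrow> nat \<Rightarrow> nat \<times> 'a \<Rightarrow> nat \<times> 'a \<Rightarrow> bool" where
  "Tstep X a p q \<longleftrightarrow> snd p \<in> fst X (a + fst p) \<and>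
     (\<exists>f. injm (fst p) (fst q) f \<and>
          snd q = snd X (a + fst p) (a + fst q) (plus_r a f) (snd p))"

definition Teq :: "'a psh \<Rightarrow> nat \<Rightarrow> nat \<times> 'a \<Rightarrow> nat \<times> 'a \<Rightarrow> bool" where
  "Teq X a = (\<lambda>p q. Tstep X a p q \<or> Tstep X a q p)\<^sup>*\<^sup>*"

definition Tcls :: "'a psh \<Rightarrow> nat \<Rightarrow> nat \<times> 'a \<Rightarrow> (nat \<times> 'a) set" where
  "Tcls X a p = {q. Teq X a p q}"

definition Tobj :: "'a psh \<Rightarrow> nat \<Rightarrow> (nat \<times> 'a) set set" where
  "Tobj X a = {Tcls X a (b, x) | b x. x \<in> fst X (a + b)}"

definition Tact :: "'a psh \<Rightarrow> nat \<Rightarrow> nat \<Rightarrow> (nat \<Rightarrow> nat) \<Rightarrow> (nat \<times> 'a) set \<Rightarrow> (nat \<times> 'a) set" where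
  "Tact X a a' f \<xi> = (case SOME p. p \<in> \<xi> of (b, x) \<Rightarrow>
       Tcls X a' (b, snd X (a + b) (a' + b) (plus_l a a' f) x))"

definition T :: "'a psh \<Rightarrow> (nat \<times> 'a) set psh" where
  "T X = (Tobj X, Tact X)"

definition eta :: "'a psh \<Rightarrow> nat \<Rightarrow> 'a \<Rightarrow> (nat \<times> 'a) set" where
  "eta X a x = Tcls X a (0, x)"

definition Tmap :: "'b psh \<Rightarrow> (nat \<Rightarrow> 'a \<Rightarrow> 'b) \<Rightarrow> nat \<Rightarrow> (nat \<times> 'a) set \<Rightarrow> (nat \<times> 'b) set" where
  "Tmap Y \<phi> a \<xi> = (case SOME p. p \<in> \<xi> of (b, x) \<Rightarrow> Tcls Y a (b, \<phi> (a + b) x))"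

text \<open>Multiplication \<mu>_X : TTX \<rightarrow> TX, induced by (a+c)+b = a+(c+b).\<close>
definition mu :: "'a psh \<Rightarrow> nat \<Rightarrow> (nat \<times> (nat \<times> 'a) set) set \<Rightarrow> (nat \<times> 'a) set" where
  "mu X a \<Xi> = (case SOME p. p \<in> \<Xi> of (c, \<xi>) \<Rightarrow>
      (case SOME q. q \<in> \<xi> of (b, x) \<Rightarrow> Tcls X a (c + b, x)))"

text \<open>Sobriety: \<eta>_X is an equalizer of \<eta>_{TX}, T\<eta>_X (limits in the presheaf
  category are computed pointwise).\<close>
definition equalizing :: "'a psh \<Rightarrow> nat \<Rightarrow> (nat \<times> 'a) set set" where
  "equalizing X a = {\<xi> \<in> Tobj X a. eta (T X) a \<xi> = Tmap (T X) (eta X) a \<xi>}"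

definition sober :: "'a psh \<Rightarrow> bool" where
  "sober X \<longleftrightarrow> (\<forall>a. inj_on (eta X a) (fst X a) \<and> eta X a ` fst X a = equalizing X a)"

text \<open>DX as the equalizing subfunctor of TX; \<theta>_X is the inclusion.\<close>
definition D :: "'a psh \<Rightarrow> (nat \<times> 'a) set psh" where
  "D X = (equalizing X, Tact X)"

text \<open>m_X : DDX \<rightarrow> DX, determined by \<theta>_X \<circ> m_X = \<mu>_X \<circ> T\<theta>_X \<circ> \<theta>_{DX}.\<close>
definition mD :: "'a psh \<Rightarrow> nat \<Rightarrow> (nat \<times> (nat \<times> 'a) set) set \<Rightarrow> (nat \<times> 'a) set" where
  "mD X a \<zeta> = mu X a (Tmap (T X) (\<lambda>n \<xi>. \<xi>) a \<zeta>)"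

definition inj_pullback ::
  "nat \<Rightarrow> nat \<Rightarrow> nat \<Rightarrow> (nat \<Rightarrow> nat) \<Rightarrow> (nat \<Rightarrow> nat) \<Rightarrow> nat \<Rightarrow> (nat \<Rightarrow> nat) \<Rightarrow> (nat \<Rightarrow> nat) \<Rightarrow> bool" where
  "inj_pullback n m p f g k h j \<longleftrightarrow>
     injm n p f \<and> injm m p g \<and> injm k n h \<and> injm k m j \<and> (\<forall>i<k. f (h i) = g (j i)) \<and>
     (\<forall>q u v. injm q n u \<and> injm q m v \<and> (\<forall>i<q. f (u i) = g (v i)) \<longrightarrow>
        (\<exists>w. injm q k w \<and> (\<forall>i<q. h (w i) = u i \<and> j (w i) = v i) \<and>
           (\<forall>w'. injm q k w' \<and> (\<forall>i<q. h (w' i) = u i \<and> j (w' i) = v i) \<longrightarrow>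
                 (\<forall>i<q. w' i = w i))))"

definition set_pullback ::
  "'a psh \<Rightarrow> nat \<Rightarrow> nat \<Rightarrow> nat \<Rightarrow> (nat \<Rightarrow> nat) \<Rightarrow> (nat \<Rightarrow> nat) \<Rightarrow> nat \<Rightarrow> (nat \<Rightarrow> nat) \<Rightarrow> (nat \<Rightarrow> nat) \<Rightarrow> bool" where
  "set_pullback X n m p f g k h j \<longleftrightarrow>
     (\<forall>x\<in>fst X n. \<forall>y\<in>fst X m. snd X n p f x = snd X m p g y \<longrightarrow>
        (\<exists>!z. z \<in> fst X k \<and> snd X k n h z = x \<and> snd X k m j z = y))"

definition nominal :: "'a psh \<Rightarrow> bool" where
  "nominal X \<longleftrightarrow> (\<forall>n m p f g k h j. inj_pullback n m p f g k h j \<longrightarrow> set_pullback X n m p f g k h j)"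

end

theory Submission
  imports Defs
begin

text \<open>Sobriety and nominality are both equivalent to two elementary properties of \<open>X\<close>: every
  \<open>X(f)\<close> is injective, and every \<open>x \<in> X(a + b)\<close> that does not depend on its last \<open>b\<close> names
  (renaming them apart in two disjoint ways gives the same element) comes from \<open>X(a)\<close>.
  For sobriety this is read off from an explicit description of the equalizer \<open>DX\<close> of
  \<open>\<eta>\<^bsub>TX\<^esub>\<close> and \<open>T\<eta>\<^bsub>X\<^esub>\<close>: the class of \<open>x \<in> X(a + b)\<close> in \<open>TX(a)\<close> lies in \<open>DX(a)\<close> exactly when
  \<open>x\<close> does not depend on its last \<open>b\<close> names. For nominality, pullbacks in Inj are
  intersections of images, and after permuting names pullback preservation reduces to the
  two properties. Finally \<open>TX\<close> has both properties for every \<open>X\<close>, and both pass to the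
  equalizer \<open>DX\<close> of two natural maps into \<open>TTX\<close>, whose action is injective; so \<open>DX\<close> is
  sober, \<open>\<eta>\<^bsub>DX\<^esub>\<close> is a bijection, and \<open>m\<^bsub>X\<^esub> \<circ> \<eta>\<^bsub>DX\<^esub> = id\<close> makes \<open>m\<^bsub>X\<^esub>\<close> a bijection too.\<close>

section \<open>Injections between finite ordinals\<close>

lemma injmI:
  "(\<And>i. i < n \<Longrightarrow> f i < m) \<Longrightarrow> (\<And>i j. i < n \<Longrightarrow> j < n \<Longrightarrow> f i = f j \<Longrightarrow> i = j) \<Longrightarrow> injm n m f"
  unfolding injm_def inj_on_def by auto

lemma injmD:
  "injm n m f \<Longrightarrow> i < n \<Longrightarrow> f i < m"
  "injm n m f \<Longrightarrow> i < n \<Longrightarrow> j < n \<Longrightarrow> f i = f j \<Longrightarrow> i = j"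
  unfolding injm_def inj_on_def by auto

lemma injm_le: "injm n m f \<Longrightarrow> n \<le> m"
  unfolding injm_def by (metis card_image card_lessThan card_mono finite_lessThan)

lemma injm_comp: "injm n m f \<Longrightarrow> injm m p g \<Longrightarrow> injm n p (g \<circ> f)"
  by (rule injmI) (auto dest: injmD)

lemma injm_mono: "injm n m f \<Longrightarrow> m \<le> m' \<Longrightarrow> injm n m' f"
  unfolding injm_def by auto

lemma injm_restrict: "injm n m f \<Longrightarrow> n' \<le> n \<Longrightarrow> injm n' m f"
  unfolding injm_def by (metis image_mono inj_on_subset lessThan_subset_iff order_trans)

lemma injm_cong: "injm n m f \<Longrightarrow> (\<And>k. k < n \<Longrightarrow> f k = g k) \<Longrightarrow> injm n m g"
  by (rule injmI) (auto dest: injmD)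

lemma injm_id: "n \<le> m \<Longrightarrow> injm n m id"
  unfolding injm_def by auto

lemma injm_0: "injm 0 m f"
  unfolding injm_def by auto

lemma injm_shift: "injm b c f \<Longrightarrow> injm b (d + c) (\<lambda>j. d + f j)"
  by (rule injmI) (auto dest: injmD)

definition copair :: "nat \<Rightarrow> (nat \<Rightarrow> nat) \<Rightarrow> (nat \<Rightarrow> nat) \<Rightarrow> nat \<Rightarrow> nat" where
  "copair n f g = (\<lambda>k. if k < n then f k else g (k - n))"

lemma injm_copair:
  assumes f: "injm n C f" and g: "injm m C g" and disj: "\<And>i j. i < n \<Longrightarrow> j < m \<Longrightarrow> f i \<noteq> g j"
  shows "injm (n + m) C (copair n f g)"
proof (rule injmI)
  fix i assume "i < n + m"
  then show "copair n f g i < C"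
    using injmD(1)[OF f, of i] injmD(1)[OF g, of "i - n"] unfolding copair_def by auto
next
  fix i j assume ij: "i < n + m" "j < n + m" and e: "copair n f g i = copair n f g j"
  show "i = j"
  proof (cases "i < n"; cases "j < n")
    assume "\<not> i < n" "\<not> j < n"
    then have "i - n = j - n" using e ij injmD(2)[OF g, of "i - n" "j - n"] unfolding copair_def by auto
    with \<open>\<not> i < n\<close> \<open>\<not> j < n\<close> show ?thesis by simp
  qed (use e ij disj injmD(2)[OF f] in \<open>auto simp: copair_def dest: sym\<close>)
qed

lemma injm_copair_id:
  assumes "injm m (a + M) h" and "\<forall>j<m. a \<le> h j"
  shows "injm (a + m) (a + M) (copair a id h)"
  using assms by (intro injm_copair) (auto intro: injm_id)

lemma injm_suffix: "injm (a + b) P f \<Longrightarrow> injm b P (\<lambda>j. f (a + j))"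
  using injm_comp[OF injm_shift[OF injm_id[of b b], of a]] by (simp add: comp_def)

lemma plus_r_copair: "plus_r a f = copair a id (\<lambda>j. a + f j)"
  by (auto simp: plus_r_def copair_def)

lemma plus_l_copair: "plus_l a a' f = copair a f (\<lambda>j. a' + j)"
  unfolding plus_l_def copair_def by simp

lemma plus_r_below: "k < a \<Longrightarrow> plus_r a f k = k"
  unfolding plus_r_def by simp

lemma injm_plus_r: "injm b c f \<Longrightarrow> injm (a + b) (a + c) (plus_r a f)"
  unfolding plus_r_copair
  by (rule injm_copair) (auto intro: injm_id injm_shift)

lemma injm_plus_l: "injm a a' f \<Longrightarrow> injm (a + b) (a' + b) (plus_l a a' f)"
  unfolding plus_l_copair
  using injm_shift[OF injm_id[of b b], of a']
  by (intro injm_copair) (auto intro: injm_mono dest: injmD(1))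

lemma plus_r_decompose:
  assumes L: "injm (a + b) (a + c) L" and L_fix: "\<forall>i<a. L i = i"
  shows "injm b c (\<lambda>j. L (a + j) - a)" and "\<And>k. k < a + b \<Longrightarrow> plus_r a (\<lambda>j. L (a + j) - a) k = L k"
proof -
  have ge: "a \<le> L (a + j)" if "j < b" for j
  proof (rule ccontr)
    assume "\<not> a \<le> L (a + j)"
    then have "L (L (a + j)) = L (a + j)" using L_fix by simp
    then show False using injmD(2)[OF L, of "L (a + j)" "a + j"] \<open>\<not> a \<le> L (a + j)\<close> that by simp
  qed
  show "injm b c (\<lambda>j. L (a + j) - a)"
  proof (rule injmI)
    fix i assume "i < b" then show "L (a + i) - a < c" using injmD(1)[OF L, of "a + i"] ge[of i] by linarith
  next
    fix i j assume "i < b" "j < b" "L (a + i) - a = L (a + j) - a"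
    then show "i = j" using ge[of i] ge[of j] injmD(2)[OF L, of "a + i" "a + j"] by simp
  qed
  show "plus_r a (\<lambda>j. L (a + j) - a) k = L k" if "k < a + b" for k
    using that L_fix ge[of "k - a"] by (auto simp: plus_r_def)
qed

lemma injm_extend:
  assumes \<sigma>: "injm n N \<sigma>" and \<tau>: "injm n M \<tau>"
  shows "\<exists>\<rho>. injm N (M + N) \<rho> \<and> (\<forall>j<n. \<rho> (\<sigma> j) = \<tau> j) \<and>
    (\<forall>i<N. i \<notin> \<sigma> ` {..<n} \<longrightarrow> M \<le> \<rho> i)"
proof -
  have inj: "inj_on \<sigma> {..<n}" using \<sigma> unfolding injm_def by blast
  define \<rho> where "\<rho> i = (if i \<in> \<sigma> ` {..<n} then \<tau> (inv_into {..<n} \<sigma> i) else M + i)" for i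
  have \<rho>\<sigma>: "\<rho> (\<sigma> j) = \<tau> j" if "j < n" for j
    using that inj unfolding \<rho>_def by auto
  have inside: "\<rho> i < M" if "i \<in> \<sigma> ` {..<n}" for i
    using that \<rho>\<sigma> injmD(1)[OF \<tau>] by auto
  have outside: "\<rho> i = M + i" if "i \<notin> \<sigma> ` {..<n}" for i
    using that unfolding \<rho>_def by simp
  have "injm N (M + N) \<rho>"
  proof (rule injmI)
    fix i assume "i < N" then show "\<rho> i < M + N"
      using inside[of i] outside[of i] by (cases "i \<in> \<sigma> ` {..<n}") auto
  next
    fix i j assume e: "\<rho> i = \<rho> j"
    show "i = j"
    proof (cases "i \<in> \<sigma> ` {..<n}"; cases "j \<in> \<sigma> ` {..<n}")
      assume "i \<in> \<sigma> ` {..<n}" "j \<in> \<sigma> ` {..<n}"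
      then obtain x y where "x < n" "y < n" "i = \<sigma> x" "j = \<sigma> y" by auto
      then show ?thesis using e \<rho>\<sigma> injmD(2)[OF \<tau>, of x y] by simp
    qed (use e inside outside in \<open>fastforce+\<close>)
  qed
  then show ?thesis using \<rho>\<sigma> unfolding \<rho>_def by auto
qed

lemma injm_extend_to_perm:
  assumes h: "injm k n h"
  shows "\<exists>\<sigma> \<pi>. injm n n \<sigma> \<and> injm n n \<pi> \<and> (\<forall>i<k. \<sigma> i = h i) \<and> (\<forall>i<n. \<sigma> (\<pi> i) = i)"
proof -
  have kn: "k \<le> n" using injm_le[OF h] .
  have hi: "inj_on h {..<k}" "h ` {..<k} \<subseteq> {..<n}" using h unfolding injm_def by auto
  have "card {k..<n} = card ({..<n} - h ` {..<k})"
    using hi kn by (simp add: card_Diff_subset card_image)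
  then obtain e where e: "bij_betw e {k..<n} ({..<n} - h ` {..<k})"
    using finite_same_card_bij by blast
  define \<sigma> where "\<sigma> i = (if i < k then h i else e i)" for i
  have "bij_betw \<sigma> ({..<k} \<union> {k..<n}) (h ` {..<k} \<union> ({..<n} - h ` {..<k}))"
  proof (rule bij_betw_combine)
    show "bij_betw \<sigma> {..<k} (h ` {..<k})"
      using hi unfolding \<sigma>_def bij_betw_def inj_on_def by auto
    show "bij_betw \<sigma> {k..<n} ({..<n} - h ` {..<k})"
      using e unfolding \<sigma>_def bij_betw_def inj_on_def by (auto simp: image_def)
  qed auto
  moreover have "{..<k} \<union> {k..<n} = {..<n}" "h ` {..<k} \<union> ({..<n} - h ` {..<k}) = {..<n}"
    using kn hi by auto
  ultimately have \<sigma>: "bij_betw \<sigma> {..<n} {..<n}" by simp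
  have "bij_betw (inv_into {..<n} \<sigma>) {..<n} {..<n}" using \<sigma> by (rule bij_betw_inv_into)
  then show ?thesis
    using \<sigma> bij_betw_inv_into_right[OF \<sigma>] unfolding injm_def bij_betw_def
    by (intro exI[of _ \<sigma>] exI[of _ "inv_into {..<n} \<sigma>"]) (auto simp: \<sigma>_def)
qed

section \<open>Functors on Inj\<close>

lemma inj_functor_closed:
  "is_inj_functor X \<Longrightarrow> injm n m f \<Longrightarrow> x \<in> fst X n \<Longrightarrow> snd X n m f x \<in> fst X m"
  unfolding is_inj_functor_def by blast

lemma inj_functor_cong:
  "is_inj_functor X \<Longrightarrow> injm n m f \<Longrightarrow> (\<And>k. k < n \<Longrightarrow> f k = g k) \<Longrightarrow> x \<in> fst X n \<Longrightarrow>
   snd X n m f x = snd X n m g x"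
  unfolding is_inj_functor_def by blast

lemma inj_functor_ident:
  assumes F: "is_inj_functor X" and x: "x \<in> fst X n" and f: "\<And>k. k < n \<Longrightarrow> f k = k"
  shows "snd X n n f x = x"
proof -
  have "snd X n n f x = snd X n n id x"
    by (rule inj_functor_cong[OF F _ _ x]) (use f injm_cong[OF injm_id[of n n]] in auto)
  also have "\<dots> = x" using F x unfolding is_inj_functor_def by blast
  finally show ?thesis .
qed

lemma inj_functor_comp:
  assumes F: "is_inj_functor X" and f: "injm n m f" and g: "injm m p g" and x: "x \<in> fst X n"
    and h: "\<And>k. k < n \<Longrightarrow> g (f k) = h k"
  shows "snd X m p g (snd X n m f x) = snd X n p h x"
proof -
  have "snd X m p g (snd X n m f x) = snd X n p (g \<circ> f) x"
    using F f g x unfolding is_inj_functor_def by simp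
  also have "\<dots> = snd X n p h x"
    using inj_functor_cong[OF F injm_comp[OF f g]] h x by auto
  finally show ?thesis .
qed

lemma act_plus_r_plus_l:
  assumes F: "is_inj_functor X" and f: "injm n m f" and u: "injm b c u" and x: "x \<in> fst X (n + b)"
  shows "snd X (m + b) (m + c) (plus_r m u) (snd X (n + b) (m + b) (plus_l n m f) x) =
         snd X (n + c) (m + c) (plus_l n m f) (snd X (n + b) (n + c) (plus_r n u) x)"
proof -
  have "snd X (m + b) (m + c) (plus_r m u) (snd X (n + b) (m + b) (plus_l n m f) x) =
      snd X (n + b) (m + c) (copair n f (\<lambda>j. m + u j)) x"
    by (rule inj_functor_comp[OF F injm_plus_l[OF f] injm_plus_r[OF u] x])
      (auto simp: plus_l_def plus_r_def copair_def dest: injmD(1)[OF f])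
  also have "\<dots> = snd X (n + c) (m + c) (plus_l n m f) (snd X (n + b) (n + c) (plus_r n u) x)"
    by (rule sym, rule inj_functor_comp[OF F injm_plus_r[OF u] injm_plus_l[OF f] x])
      (auto simp: plus_l_def plus_r_def copair_def)
  finally show ?thesis .
qed

definition natural :: "'a psh \<Rightarrow> 'b psh \<Rightarrow> (nat \<Rightarrow> 'a \<Rightarrow> 'b) \<Rightarrow> bool" where
  "natural X Y \<phi> \<longleftrightarrow> (\<forall>n x. x \<in> fst X n \<longrightarrow> \<phi> n x \<in> fst Y n) \<and>
     (\<forall>n m f x. injm n m f \<longrightarrow> x \<in> fst X n \<longrightarrow> \<phi> m (snd X n m f x) = snd Y n m f (\<phi> n x))"

lemma naturalD:
  "natural X Y \<phi> \<Longrightarrow> x \<in> fst X n \<Longrightarrow> \<phi> n x \<in> fst Y n"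
  "natural X Y \<phi> \<Longrightarrow> injm n m f \<Longrightarrow> x \<in> fst X n \<Longrightarrow> \<phi> m (snd X n m f x) = snd Y n m f (\<phi> n x)"
  unfolding natural_def by blast+

definition injective_action :: "'a psh \<Rightarrow> bool" where
  "injective_action X \<longleftrightarrow> (\<forall>n m f x y. injm n m f \<longrightarrow> x \<in> fst X n \<longrightarrow> y \<in> fst X n \<longrightarrow>
     snd X n m f x = snd X n m f y \<longrightarrow> x = y)"

lemma injective_actionD:
  "injective_action X \<Longrightarrow> injm n m f \<Longrightarrow> x \<in> fst X n \<Longrightarrow> y \<in> fst X n \<Longrightarrow>
   snd X n m f x = snd X n m f y \<Longrightarrow> x = y"
  unfolding injective_action_def by blast

section \<open>The monad T\<close>

text \<open>Since Inj has amalgamation (\<open>injm_extend\<close>), the equivalence relation generated by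
  \<open>Tstep\<close> is just joinability.\<close>
definition joinable :: "'a psh \<Rightarrow> nat \<Rightarrow> nat \<times> 'a \<Rightarrow> nat \<times> 'a \<Rightarrow> bool" where
  "joinable X a p q \<longleftrightarrow> snd p \<in> fst X (a + fst p) \<and> snd q \<in> fst X (a + fst q) \<and>
     (\<exists>c f g. injm (fst p) c f \<and> injm (fst q) c g \<and>
        snd X (a + fst p) (a + c) (plus_r a f) (snd p) = snd X (a + fst q) (a + c) (plus_r a g) (snd q))"

lemma joinable_refl: "snd p \<in> fst X (a + fst p) \<Longrightarrow> joinable X a p p"
  unfolding joinable_def by (blast intro: injm_id)

lemma joinable_sym: "joinable X a p q \<Longrightarrow> joinable X a q p"
  unfolding joinable_def by metis

lemma joinable_trans:
  assumes F: "is_inj_functor X" and pq: "joinable X a p q" and qr: "joinable X a q r"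
  shows "joinable X a p r"
proof -
  obtain b x b' x' b'' x'' where P: "p = (b, x)" "q = (b', x')" "r = (b'', x'')"
    by (metis surj_pair)
  from pq obtain c f g where x: "x \<in> fst X (a + b)" and x': "x' \<in> fst X (a + b')"
    and f: "injm b c f" and g: "injm b' c g"
    and e1: "snd X (a + b) (a + c) (plus_r a f) x = snd X (a + b') (a + c) (plus_r a g) x'"
    unfolding joinable_def P by auto
  from qr obtain c' f' g' where x'': "x'' \<in> fst X (a + b'')" and f': "injm b' c' f'" and g': "injm b'' c' g'"
    and e2: "snd X (a + b') (a + c') (plus_r a f') x' = snd X (a + b'') (a + c') (plus_r a g') x''"
    unfolding joinable_def P by auto
  obtain \<rho> where \<rho>: "injm c' (c + c') \<rho>" and \<rho>f': "\<forall>j<b'. \<rho> (f' j) = g j"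
    using injm_extend[OF f' g] by blast
  have u: "injm (a + c) (a + (c + c')) (plus_r a id)" by (rule injm_plus_r[OF injm_id]) simp
  have r: "injm (a + c') (a + (c + c')) (plus_r a \<rho>)" by (rule injm_plus_r[OF \<rho>])
  have "snd X (a + b) (a + (c + c')) (plus_r a f) x =
      snd X (a + c) (a + (c + c')) (plus_r a id) (snd X (a + b) (a + c) (plus_r a f) x)"
    by (rule sym, rule inj_functor_comp[OF F injm_plus_r[OF f] u x]) (simp add: plus_r_def)
  also have "\<dots> = snd X (a + c) (a + (c + c')) (plus_r a id) (snd X (a + b') (a + c) (plus_r a g) x')"
    by (simp add: e1)
  also have "\<dots> = snd X (a + c') (a + (c + c')) (plus_r a \<rho>) (snd X (a + b') (a + c') (plus_r a f') x')"
    using inj_functor_comp[OF F injm_plus_r[OF g] u x', of "plus_r a (\<rho> \<circ> f')"]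
      inj_functor_comp[OF F injm_plus_r[OF f'] r x', of "plus_r a (\<rho> \<circ> f')"]
    by (simp add: plus_r_def \<rho>f')
  also have "\<dots> = snd X (a + b'') (a + (c + c')) (plus_r a (\<rho> \<circ> g')) x''"
    by (simp add: e2, rule inj_functor_comp[OF F injm_plus_r[OF g'] r x'']) (simp add: plus_r_def)
  finally show ?thesis
    unfolding joinable_def P using x x'' injm_mono[OF f, of "c + c'"] injm_comp[OF g' \<rho>]
    by (auto intro!: exI[of _ "c + c'"])
qed

lemma Tstep_imp_joinable:
  assumes F: "is_inj_functor X" and s: "Tstep X a p q"
  shows "joinable X a p q"
proof -
  obtain b x b' x' where P: "p = (b, x)" "q = (b', x')" by (metis surj_pair)
  from s obtain f where x: "x \<in> fst X (a + b)" and f: "injm b b' f"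
    and q: "x' = snd X (a + b) (a + b') (plus_r a f) x"
    unfolding Tstep_def P by auto
  have x': "x' \<in> fst X (a + b')" using inj_functor_closed[OF F injm_plus_r[OF f] x] q by simp
  have "snd X (a + b') (a + b') (plus_r a id) x' = x'"
    by (rule inj_functor_ident[OF F x']) (simp add: plus_r_def)
  then have "injm b b' f \<and> injm b' b' id \<and>
      snd X (a + b) (a + b') (plus_r a f) x = snd X (a + b') (a + b') (plus_r a id) x'"
    using f q by (simp add: injm_id)
  then show ?thesis unfolding joinable_def P fst_conv snd_conv using x x' by blast
qed

lemma Teq_iff_joinable:
  assumes F: "is_inj_functor X" and p: "snd p \<in> fst X (a + fst p)"
  shows "Teq X a p q \<longleftrightarrow> joinable X a p q"
proof
  assume "Teq X a p q"
  then show "joinable X a p q"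
    unfolding Teq_def
  proof (induction rule: rtranclp_induct)
    case base then show ?case using joinable_refl[OF p] .
  next
    case (step y z)
    then show ?case using joinable_trans[OF F] joinable_sym Tstep_imp_joinable[OF F] by metis
  qed
next
  assume "joinable X a p q"
  then obtain c f g where f: "injm (fst p) c f" and g: "injm (fst q) c g"
    and e: "snd X (a + fst p) (a + c) (plus_r a f) (snd p) = snd X (a + fst q) (a + c) (plus_r a g) (snd q)"
    and vp: "snd p \<in> fst X (a + fst p)" and vq: "snd q \<in> fst X (a + fst q)"
    unfolding joinable_def by blast
  let ?r = "(c, snd X (a + fst p) (a + c) (plus_r a f) (snd p))"
  have "Tstep X a p ?r" "Tstep X a q ?r" unfolding Tstep_def using f g e vp vq by auto
  then show "Teq X a p q" unfolding Teq_def
    using rtranclp.rtrancl_into_rtrancl[OF r_into_rtranclp,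
        of "\<lambda>p q. Tstep X a p q \<or> Tstep X a q p" p ?r q] by blast
qed

lemma Tcls_self: "p \<in> Tcls X a p"
  unfolding Tcls_def Teq_def by simp

lemma Tcls_eq_iff_joinable:
  assumes F: "is_inj_functor X" and p: "snd p \<in> fst X (a + fst p)" and q: "snd q \<in> fst X (a + fst q)"
  shows "Tcls X a p = Tcls X a q \<longleftrightarrow> joinable X a p q"
proof
  assume "Tcls X a p = Tcls X a q"
  then show "joinable X a p q"
    using Tcls_self[of q X a] Teq_iff_joinable[OF F p] unfolding Tcls_def by blast
next
  assume "joinable X a p q"
  then show "Tcls X a p = Tcls X a q"
    unfolding Tcls_def using Teq_iff_joinable[OF F p] Teq_iff_joinable[OF F q]
      joinable_trans[OF F] joinable_sym by blast
qed

lemma Tcls_eq_iff: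
  assumes "is_inj_functor X" and "x \<in> fst X (a + b)" and "x' \<in> fst X (a + b')"
  shows "Tcls X a (b, x) = Tcls X a (b', x') \<longleftrightarrow>
    (\<exists>c f g. injm b c f \<and> injm b' c g \<and>
       snd X (a + b) (a + c) (plus_r a f) x = snd X (a + b') (a + c) (plus_r a g) x')"
  using Tcls_eq_iff_joinable[of X "(b, x)" a "(b', x')"] assms unfolding joinable_def by auto

lemma Tcls_eqI:
  assumes F: "is_inj_functor X" and x: "x \<in> fst X (a + b)" and x': "x' \<in> fst X (a + b')"
    and L: "injm (a + b) (a + c) L" and R: "injm (a + b') (a + c) R"
    and L_fix: "\<forall>i<a. L i = i" and R_fix: "\<forall>i<a. R i = i"
    and e: "snd X (a + b) (a + c) L x = snd X (a + b') (a + c) R x'"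
  shows "Tcls X a (b, x) = Tcls X a (b', x')"
proof -
  note dL = plus_r_decompose[OF L L_fix] and dR = plus_r_decompose[OF R R_fix]
  have "snd X (a + b) (a + c) (plus_r a (\<lambda>j. L (a + j) - a)) x =
      snd X (a + b') (a + c) (plus_r a (\<lambda>j. R (a + j) - a)) x'"
    using e inj_functor_cong[OF F L _ x] inj_functor_cong[OF F R _ x'] dL(2) dR(2) by metis
  then show ?thesis using Tcls_eq_iff[OF F x x'] dL(1) dR(1) by blast
qed

lemma Tcls_in_Tobj: "x \<in> fst X (a + b) \<Longrightarrow> Tcls X a (b, x) \<in> Tobj X a"
  unfolding Tobj_def by auto

lemma Tobj_obtain_rep:
  assumes F: "is_inj_functor X" and \<xi>: "\<xi> \<in> Tobj X a"
  obtains b x where "(SOME p. p \<in> \<xi>) = (b, x)" "x \<in> fst X (a + b)" "\<xi> = Tcls X a (b, x)"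
proof -
  from \<xi> obtain b0 x0 where x0: "x0 \<in> fst X (a + b0)" and \<xi>_eq: "\<xi> = Tcls X a (b0, x0)"
    unfolding Tobj_def by auto
  have "(SOME p. p \<in> \<xi>) \<in> \<xi>" using \<xi>_eq Tcls_self by (metis someI)
  then obtain b x where s: "(SOME p. p \<in> \<xi>) = (b, x)" and "(b, x) \<in> \<xi>" by (metis surj_pair)
  then have j: "joinable X a (b0, x0) (b, x)"
    using Teq_iff_joinable[OF F] x0 \<xi>_eq unfolding Tcls_def by auto
  then have x: "x \<in> fst X (a + b)" unfolding joinable_def by simp
  have "\<xi> = Tcls X a (b, x)" using Tcls_eq_iff_joinable[OF F] x0 x j \<xi>_eq by simp
  with s x that show ?thesis by blast
qed

lemma Tact_cls:
  assumes F: "is_inj_functor X" and f: "injm a a' f" and x: "x \<in> fst X (a + b)"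
  shows "Tact X a a' f (Tcls X a (b, x)) = Tcls X a' (b, snd X (a + b) (a' + b) (plus_l a a' f) x)"
proof -
  obtain b0 x0 where s: "(SOME p. p \<in> Tcls X a (b, x)) = (b0, x0)" and x0: "x0 \<in> fst X (a + b0)"
    and "Tcls X a (b, x) = Tcls X a (b0, x0)"
    using Tobj_obtain_rep[OF F Tcls_in_Tobj[OF x]] by metis
  then obtain c u v where u: "injm b0 c u" and v: "injm b c v"
    and e: "snd X (a + b0) (a + c) (plus_r a u) x0 = snd X (a + b) (a + c) (plus_r a v) x"
    using Tcls_eq_iff[OF F x0 x] by metis
  have "snd X (a' + b0) (a' + c) (plus_r a' u) (snd X (a + b0) (a' + b0) (plus_l a a' f) x0) =
      snd X (a' + b) (a' + c) (plus_r a' v) (snd X (a + b) (a' + b) (plus_l a a' f) x)"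
    using act_plus_r_plus_l[OF F f u x0] act_plus_r_plus_l[OF F f v x] e by simp
  then have "Tcls X a' (b0, snd X (a + b0) (a' + b0) (plus_l a a' f) x0) =
      Tcls X a' (b, snd X (a + b) (a' + b) (plus_l a a' f) x)"
    using Tcls_eq_iff[OF F inj_functor_closed[OF F injm_plus_l[OF f] x0]
        inj_functor_closed[OF F injm_plus_l[OF f] x]] u v by blast
  then show ?thesis unfolding Tact_def s by simp
qed

lemma Tact_Tcls_eq_iff:
  assumes F: "is_inj_functor X" and f1: "injm n1 m f1" and f2: "injm n2 m f2"
    and x1: "x1 \<in> fst X (n1 + e1)" and x2: "x2 \<in> fst X (n2 + e2)"
  shows "Tact X n1 m f1 (Tcls X n1 (e1, x1)) = Tact X n2 m f2 (Tcls X n2 (e2, x2)) \<longleftrightarrow>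
    (\<exists>K v1 v2. injm e1 K v1 \<and> injm e2 K v2 \<and>
       snd X (n1 + e1) (m + K) (plus_r m v1 \<circ> plus_l n1 m f1) x1 =
       snd X (n2 + e2) (m + K) (plus_r m v2 \<circ> plus_l n2 m f2) x2)"
proof -
  have comp: "snd X (m + e) (m + K) (plus_r m v) (snd X (n + e) (m + e) (plus_l n m f) x) =
      snd X (n + e) (m + K) (plus_r m v \<circ> plus_l n m f) x"
    if "injm n m f" "injm e K v" "x \<in> fst X (n + e)" for n f e K v x
    by (rule inj_functor_comp[OF F injm_plus_l[OF that(1)] injm_plus_r[OF that(2)] that(3)]) simp
  show ?thesis
    unfolding Tact_cls[OF F f1 x1] Tact_cls[OF F f2 x2]
      Tcls_eq_iff[OF F inj_functor_closed[OF F injm_plus_l[OF f1] x1] inj_functor_closed[OF F injm_plus_l[OF f2] x2]]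
    using comp f1 f2 x1 x2 by (simp cong: conj_cong)
qed

lemma Tmap_cls:
  assumes F: "is_inj_functor X" and G: "is_inj_functor Y" and \<phi>: "natural X Y \<phi>"
    and x: "x \<in> fst X (a + b)"
  shows "Tmap Y \<phi> a (Tcls X a (b, x)) = Tcls Y a (b, \<phi> (a + b) x)"
proof -
  obtain b0 x0 where s: "(SOME p. p \<in> Tcls X a (b, x)) = (b0, x0)" and x0: "x0 \<in> fst X (a + b0)"
    and "Tcls X a (b, x) = Tcls X a (b0, x0)"
    using Tobj_obtain_rep[OF F Tcls_in_Tobj[OF x]] by metis
  then obtain c u v where u: "injm b0 c u" and v: "injm b c v"
    and e: "snd X (a + b0) (a + c) (plus_r a u) x0 = snd X (a + b) (a + c) (plus_r a v) x"
    using Tcls_eq_iff[OF F x0 x] by metis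
  have "snd Y (a + b0) (a + c) (plus_r a u) (\<phi> (a + b0) x0) =
      snd Y (a + b) (a + c) (plus_r a v) (\<phi> (a + b) x)"
    using naturalD(2)[OF \<phi> injm_plus_r[OF u] x0] naturalD(2)[OF \<phi> injm_plus_r[OF v] x] e by simp
  moreover have "\<phi> (a + b0) x0 \<in> fst Y (a + b0)" "\<phi> (a + b) x \<in> fst Y (a + b)"
    using naturalD(1)[OF \<phi>] x0 x by auto
  ultimately have "Tcls Y a (b0, \<phi> (a + b0) x0) = Tcls Y a (b, \<phi> (a + b) x)"
    using Tcls_eq_iff[OF G] u v by blast
  then show ?thesis unfolding Tmap_def s by simp
qed

lemma T_functor:
  assumes F: "is_inj_functor X"
  shows "is_inj_functor (T X)"
  unfolding is_inj_functor_def T_def fst_conv snd_conv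
proof (intro conjI allI impI)
  fix n m f \<xi> assume f: "injm n m f" and "\<xi> \<in> Tobj X n"
  then obtain b x where x: "x \<in> fst X (n + b)" and \<xi>: "\<xi> = Tcls X n (b, x)"
    using Tobj_obtain_rep[OF F] by metis
  show "Tact X n m f \<xi> \<in> Tobj X m"
    unfolding \<xi> Tact_cls[OF F f x] by (intro Tcls_in_Tobj inj_functor_closed[OF F injm_plus_l[OF f] x])
next
  fix n \<xi> assume "\<xi> \<in> Tobj X n"
  then obtain b x where x: "x \<in> fst X (n + b)" and \<xi>: "\<xi> = Tcls X n (b, x)"
    using Tobj_obtain_rep[OF F] by metis
  show "Tact X n n id \<xi> = \<xi>"
    unfolding \<xi> Tact_cls[OF F injm_id[of n n] x, simplified]
    by (subst inj_functor_ident[OF F x]) (auto simp: plus_l_def)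
next
  fix n m p f g \<xi> assume f: "injm n m f" and g: "injm m p g" and "\<xi> \<in> Tobj X n"
  then obtain b x where x: "x \<in> fst X (n + b)" and \<xi>: "\<xi> = Tcls X n (b, x)"
    using Tobj_obtain_rep[OF F] by metis
  show "Tact X n p (g \<circ> f) \<xi> = Tact X m p g (Tact X n m f \<xi>)"
    unfolding \<xi> Tact_cls[OF F injm_comp[OF f g] x] Tact_cls[OF F f x]
      Tact_cls[OF F g inj_functor_closed[OF F injm_plus_l[OF f] x]]
    by (subst inj_functor_comp[OF F injm_plus_l[OF f] injm_plus_l[OF g] x])
      (auto simp: plus_l_def dest: injmD(1)[OF f])
next
  fix n m f g \<xi> assume f: "injm n m f" and fg: "\<forall>k<n. f k = g k" and "\<xi> \<in> Tobj X n"
  then obtain b x where x: "x \<in> fst X (n + b)" and \<xi>: "\<xi> = Tcls X n (b, x)"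
    using Tobj_obtain_rep[OF F] by metis
  have g: "injm n m g" using injm_cong[OF f] fg by auto
  show "Tact X n m f \<xi> = Tact X n m g \<xi>"
    unfolding \<xi> Tact_cls[OF F f x] Tact_cls[OF F g x]
    by (subst inj_functor_cong[OF F injm_plus_l[OF f] _ x, of "plus_l n m g"]) (auto simp: plus_l_def fg)
qed

lemma eta_in_Tobj: "x \<in> fst X a \<Longrightarrow> eta X a x \<in> Tobj X a"
  unfolding eta_def by (rule Tcls_in_Tobj) simp

lemma eta_natural:
  assumes F: "is_inj_functor X"
  shows "natural X (T X) (eta X)"
  unfolding natural_def T_def fst_conv snd_conv
proof (intro conjI allI impI)
  fix n x assume "x \<in> fst X n" then show "eta X n x \<in> Tobj X n" by (rule eta_in_Tobj)
next
  fix n m f x assume f: "injm n m f" and x: "x \<in> fst X n"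
  have x0: "x \<in> fst X (n + 0)" using x by simp
  show "eta X m (snd X n m f x) = Tact X n m f (eta X n x)"
    unfolding eta_def Tact_cls[OF F f x0]
    using inj_functor_cong[OF F f _ x, of "plus_l n m f"] by (simp add: plus_l_def)
qed

lemma Tmap_natural:
  assumes F: "is_inj_functor X" and G: "is_inj_functor Y" and \<phi>: "natural X Y \<phi>"
  shows "natural (T X) (T Y) (Tmap Y \<phi>)"
  unfolding natural_def T_def fst_conv snd_conv
proof (intro conjI allI impI)
  fix n \<xi> assume "\<xi> \<in> Tobj X n"
  then obtain b x where x: "x \<in> fst X (n + b)" and \<xi>: "\<xi> = Tcls X n (b, x)"
    using Tobj_obtain_rep[OF F] by metis
  show "Tmap Y \<phi> n \<xi> \<in> Tobj Y n"
    unfolding \<xi> Tmap_cls[OF F G \<phi> x] by (rule Tcls_in_Tobj[OF naturalD(1)[OF \<phi> x]])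
next
  fix n m f \<xi> assume f: "injm n m f" and "\<xi> \<in> Tobj X n"
  then obtain b x where x: "x \<in> fst X (n + b)" and \<xi>: "\<xi> = Tcls X n (b, x)"
    using Tobj_obtain_rep[OF F] by metis
  have \<phi>x: "\<phi> (n + b) x \<in> fst Y (n + b)" by (rule naturalD(1)[OF \<phi> x])
  show "Tmap Y \<phi> m (Tact X n m f \<xi>) = Tact Y n m f (Tmap Y \<phi> n \<xi>)"
    unfolding \<xi> Tact_cls[OF F f x] Tmap_cls[OF F G \<phi> x] Tact_cls[OF G f \<phi>x]
      Tmap_cls[OF F G \<phi> inj_functor_closed[OF F injm_plus_l[OF f] x]]
    using naturalD(2)[OF \<phi> injm_plus_l[OF f] x] by simp
qed

lemma T_injective_action:
  assumes F: "is_inj_functor X"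
  shows "injective_action (T X)"
  unfolding injective_action_def T_def fst_conv snd_conv
proof (intro allI impI)
  fix n m f \<xi>1 \<xi>2 assume f: "injm n m f" and "\<xi>1 \<in> Tobj X n" "\<xi>2 \<in> Tobj X n"
    and e: "Tact X n m f \<xi>1 = Tact X n m f \<xi>2"
  then obtain b1 y1 b2 y2 where y1: "y1 \<in> fst X (n + b1)" and \<xi>1: "\<xi>1 = Tcls X n (b1, y1)"
    and y2: "y2 \<in> fst X (n + b2)" and \<xi>2: "\<xi>2 = Tcls X n (b2, y2)"
    using Tobj_obtain_rep[OF F] by metis
  from e obtain K u v where u: "injm b1 K u" and v: "injm b2 K v"
    and e': "snd X (n + b1) (m + K) (plus_r m u \<circ> plus_l n m f) y1 =
      snd X (n + b2) (m + K) (plus_r m v \<circ> plus_l n m f) y2"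
    unfolding \<xi>1 \<xi>2 Tact_Tcls_eq_iff[OF F f f y1 y2] by blast
  define N where "N = n + (K + (m + K))"
  obtain \<rho> where \<rho>: "injm (m + K) N \<rho>" and \<rho>_inv: "\<forall>j<n + K. \<rho> (plus_l n m f j) = j"
    using injm_extend[OF injm_plus_l[OF f] injm_id[of "n + K" "n + K"]] unfolding N_def
    by (auto simp: add.assoc)
  have retract: "snd X (m + K) N \<rho> (snd X (n + b) (m + K) (plus_r m w \<circ> plus_l n m f) y) =
      snd X (n + b) N (plus_r n w) y" if w: "injm b K w" and y: "y \<in> fst X (n + b)" for b w y
  proof (rule inj_functor_comp[OF F injm_comp[OF injm_plus_l[OF f] injm_plus_r[OF w]] \<rho> y])
    fix k assume "k < n + b"
    then show "\<rho> ((plus_r m w \<circ> plus_l n m f) k) = plus_r n w k"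
      using \<rho>_inv[rule_format, of k] \<rho>_inv[rule_format, of "n + w (k - n)"]
        injmD(1)[OF f, of k] injmD(1)[OF w, of "k - n"]
      by (cases "k < n") (auto simp: plus_r_def plus_l_def)
  qed
  have "snd X (n + b1) N (plus_r n u) y1 = snd X (n + b2) N (plus_r n v) y2"
    using retract[OF u y1] retract[OF v y2] e' by simp
  then show "\<xi>1 = \<xi>2"
    unfolding \<xi>1 \<xi>2 N_def using Tcls_eq_iff[OF F y1 y2] injm_mono[OF u] injm_mono[OF v] by auto
qed

lemma mu_cls:
  assumes F: "is_inj_functor X" and x: "x \<in> fst X (a + c + b)"
  shows "mu X a (Tcls (T X) a (c, Tcls X (a + c) (b, x))) = Tcls X a (c + b, x)"
proof -
  have FT: "is_inj_functor (T X)" by (rule T_functor[OF F])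
  let ?\<xi> = "Tcls X (a + c) (b, x)"
  have \<xi>: "?\<xi> \<in> fst (T X) (a + c)" unfolding T_def by (simp add: Tcls_in_Tobj x)
  obtain c' \<xi>' where s1: "(SOME p. p \<in> Tcls (T X) a (c, ?\<xi>)) = (c', \<xi>')"
    and \<xi>': "\<xi>' \<in> fst (T X) (a + c')" and eq1: "Tcls (T X) a (c, ?\<xi>) = Tcls (T X) a (c', \<xi>')"
    using Tobj_obtain_rep[OF FT Tcls_in_Tobj[OF \<xi>]] by metis
  obtain b' x' where s2: "(SOME p. p \<in> \<xi>') = (b', x')" and x': "x' \<in> fst X (a + c' + b')"
    and \<xi>'_eq: "\<xi>' = Tcls X (a + c') (b', x')"
    using Tobj_obtain_rep[OF F] \<xi>' unfolding T_def by (metis fst_conv)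
  from eq1 obtain e f g where f: "injm c e f" and g: "injm c' e g"
    and "Tact X (a + c) (a + e) (plus_r a f) ?\<xi> = Tact X (a + c') (a + e) (plus_r a g) \<xi>'"
    using Tcls_eq_iff[OF FT \<xi> \<xi>'] unfolding T_def by auto
  then obtain K h1 h2 where h1: "injm b K h1" and h2: "injm b' K h2"
    and "snd X (a + c + b) (a + e + K) (plus_r (a + e) h1 \<circ> plus_l (a + c) (a + e) (plus_r a f)) x =
      snd X (a + c' + b') (a + e + K) (plus_r (a + e) h2 \<circ> plus_l (a + c') (a + e) (plus_r a g)) x'"
    unfolding \<xi>'_eq Tact_Tcls_eq_iff[OF F injm_plus_r[OF f] injm_plus_r[OF g] x x'] by blast
  moreover have "injm (a + c + b) (a + e + K) (plus_r (a + e) h1 \<circ> plus_l (a + c) (a + e) (plus_r a f))"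
    and "injm (a + c' + b') (a + e + K) (plus_r (a + e) h2 \<circ> plus_l (a + c') (a + e) (plus_r a g))"
    by (rule injm_comp[OF injm_plus_l[OF injm_plus_r[OF f]] injm_plus_r[OF h1]],
        rule injm_comp[OF injm_plus_l[OF injm_plus_r[OF g]] injm_plus_r[OF h2]])
  moreover have "\<forall>i<a. (plus_r (a + e) h1 \<circ> plus_l (a + c) (a + e) (plus_r a f)) i = i"
    and "\<forall>i<a. (plus_r (a + e) h2 \<circ> plus_l (a + c') (a + e) (plus_r a g)) i = i"
    by (simp_all add: plus_l_def plus_r_def)
  ultimately have "Tcls X a (c + b, x) = Tcls X a (c' + b', x')"
    using Tcls_eqI[OF F, where b = "c + b" and b' = "c' + b'" and c = "e + K"] x x' by (simp add: add.assoc)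
  then show ?thesis unfolding mu_def s1 by (simp add: s2)
qed

section \<open>Sobriety\<close>

text \<open>\<open>x \<in> X(a + b)\<close> is supported by its first \<open>a\<close> names if renaming the last \<open>b\<close> names
  into two disjoint fresh blocks \<open>[a, a + c)\<close> and \<open>[a + c, a + c + d)\<close> gives the same element.\<close>
definition prefix_supported :: "'a psh \<Rightarrow> nat \<Rightarrow> nat \<Rightarrow> 'a \<Rightarrow> bool" where
  "prefix_supported X a b x \<longleftrightarrow> (\<exists>c g d u. injm b c g \<and> injm b d u \<and>
     snd X (a + b) (a + c + d) (plus_r a g) x = snd X (a + b) (a + c + d) (plus_r a (\<lambda>j. c + u j)) x)"

definition supported_descends :: "'a psh \<Rightarrow> bool" where
  "supported_descends X \<longleftrightarrow> (\<forall>a b y. y \<in> fst X (a + b) \<longrightarrow> prefix_supported X a b y \<longrightarrow>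
     (\<exists>z\<in>fst X a. snd X a (a + b) id z = y))"

lemma prefix_supported_zero: "prefix_supported X a 0 x"
proof -
  have "injm 0 0 id \<and> injm 0 0 id \<and>
      snd X (a + 0) (a + 0 + 0) (plus_r a id) x = snd X (a + 0) (a + 0 + 0) (plus_r a (\<lambda>j. 0 + id j)) x"
    by (simp add: injm_0 id_def)
  then show ?thesis unfolding prefix_supported_def by blast
qed

lemma prefix_supportedI:
  assumes F: "is_inj_functor X" and x: "x \<in> fst X (a + b)"
    and L: "injm (a + b) P L" and R: "injm (a + b) P R"
    and agree: "\<forall>i<a. L i = R i" and apart: "\<forall>j<b. \<forall>j'<b. L (a + j) \<noteq> R (a + j')"
    and e: "snd X (a + b) P L x = snd X (a + b) P R x"
  shows "prefix_supported X a b x"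
proof -
  let ?\<sigma> = "copair (a + b) L (\<lambda>j. R (a + j))"
  have \<sigma>: "injm (a + b + b) P ?\<sigma>"
  proof (rule injm_copair[OF L])
    show "injm b P (\<lambda>j. R (a + j))" by (rule injm_suffix[OF R])
    show "L i \<noteq> R (a + j)" if "i < a + b" "j < b" for i j
      using that agree injmD(2)[OF R, of i "a + j"] apart[rule_format, of "i - a" j] by (cases "i < a") auto
  qed
  obtain \<rho> where \<rho>: "injm P (a + b + b + P) \<rho>" and \<rho>\<sigma>: "\<forall>i<a + b + b. \<rho> (?\<sigma> i) = i"
    using injm_extend[OF \<sigma> injm_id[of "a + b + b" "a + b + b"]] by auto
  have \<rho>L: "\<rho> (L k) = k" if "k < a + b" for k
    using \<rho>\<sigma>[rule_format, of k] that by (simp add: copair_def)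
  have "snd X (a + b) (a + b + b + P) (plus_r a id) x = snd X P (a + b + b + P) \<rho> (snd X (a + b) P L x)"
    by (rule sym, rule inj_functor_comp[OF F L \<rho> x]) (use \<rho>L in \<open>simp add: plus_r_def\<close>)
  also have "\<dots> = snd X P (a + b + b + P) \<rho> (snd X (a + b) P R x)" by (simp add: e)
  also have "\<dots> = snd X (a + b) (a + b + b + P) (plus_r a (\<lambda>j. b + id j)) x"
  proof (rule inj_functor_comp[OF F R \<rho> x])
    fix k assume k: "k < a + b"
    show "\<rho> (R k) = plus_r a (\<lambda>j. b + id j) k"
    proof (cases "k < a")
      case True then show ?thesis using \<rho>L[of k] agree by (simp add: plus_r_def)
    next
      case False
      then have "?\<sigma> (a + b + (k - a)) = R k" using k by (simp add: copair_def)
      then show ?thesis using \<rho>\<sigma>[rule_format, of "a + b + (k - a)"] False k by (simp add: plus_r_def)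
    qed
  qed
  finally have "injm b b id \<and> injm b (b + P) id \<and>
      snd X (a + b) (a + b + (b + P)) (plus_r a id) x =
      snd X (a + b) (a + b + (b + P)) (plus_r a (\<lambda>j. b + id j)) x"
    by (simp add: injm_id add.assoc)
  then show ?thesis unfolding prefix_supported_def by blast
qed

lemma Tact_Tcls_eq_Tact_eta_iff:
  assumes F: "is_inj_functor X" and x: "x \<in> fst X (a + b)" and g: "injm b c g"
  shows "Tact X a (a + c) (plus_r a f) (Tcls X a (b, x)) = Tact X (a + b) (a + c) (plus_r a g) (eta X (a + b) x) \<longleftrightarrow>
    (\<exists>d u. injm b d u \<and>
       snd X (a + b) (a + c + d) (plus_r a g) x = snd X (a + b) (a + c + d) (plus_r a (\<lambda>j. c + u j)) x)"
proof -
  have x0: "x \<in> fst X (a + b + 0)" using x by simp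
  have f: "injm a (a + c) (plus_r a f)" using injm_plus_r[OF injm_0, of a c f] by simp
  have g': "injm (a + b) (a + c) (plus_r a g)" by (rule injm_plus_r[OF g])
  have shift: "snd X (a + b) (a + c + d) (plus_r (a + c) u \<circ> plus_l a (a + c) (plus_r a f)) x =
      snd X (a + b) (a + c + d) (plus_r a (\<lambda>j. c + u j)) x" if u: "injm b d u" for d u
    by (rule inj_functor_cong[OF F injm_comp[OF injm_plus_l[OF f] injm_plus_r[OF u]] _ x])
      (simp add: plus_r_def plus_l_def)
  have stay: "snd X (a + b) (a + c + d) (plus_r (a + c) v \<circ> plus_l (a + b) (a + c) (plus_r a g)) x =
      snd X (a + b) (a + c + d) (plus_r a g) x" for d v
  proof (rule inj_functor_cong[OF F _ _ x])
    show "injm (a + b) (a + c + d) (plus_r (a + c) v \<circ> plus_l (a + b) (a + c) (plus_r a g))"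
      using injm_comp[OF injm_plus_l[OF g', of 0] injm_plus_r[OF injm_0, of "a + c" d v]] by simp
    fix k assume "k < a + b"
    then show "(plus_r (a + c) v \<circ> plus_l (a + b) (a + c) (plus_r a g)) k = plus_r a g k"
      using injmD(1)[OF g, of "k - a"] by (auto simp: plus_r_def plus_l_def)
  qed
  show ?thesis
    unfolding eta_def Tact_Tcls_eq_iff[OF F f g' x x0] using shift stay
    by (simp cong: conj_cong add: injm_0) (blast dest: sym)
qed

lemma Tcls_in_equalizing_iff:
  assumes F: "is_inj_functor X" and x: "x \<in> fst X (a + b)"
  shows "Tcls X a (b, x) \<in> equalizing X a \<longleftrightarrow> prefix_supported X a b x"
proof -
  have FT: "is_inj_functor (T X)" by (rule T_functor[OF F])
  let ?\<xi> = "Tcls X a (b, x)"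
  have \<xi>: "?\<xi> \<in> fst (T X) (a + 0)" unfolding T_def using Tcls_in_Tobj[OF x] by simp
  have \<eta>x: "eta X (a + b) x \<in> fst (T X) (a + b)" unfolding T_def using eta_in_Tobj[OF x] by simp
  have "eta (T X) a ?\<xi> = Tcls (T X) a (0, ?\<xi>)" unfolding eta_def ..
  moreover have "Tmap (T X) (eta X) a ?\<xi> = Tcls (T X) a (b, eta X (a + b) x)"
    by (rule Tmap_cls[OF F FT eta_natural[OF F] x])
  ultimately have "?\<xi> \<in> equalizing X a \<longleftrightarrow> Tcls (T X) a (0, ?\<xi>) = Tcls (T X) a (b, eta X (a + b) x)"
    unfolding equalizing_def using Tcls_in_Tobj[OF x] by simp
  also have "\<dots> \<longleftrightarrow> (\<exists>c f g. injm 0 c f \<and> injm b c g \<and>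
      Tact X a (a + c) (plus_r a f) ?\<xi> = Tact X (a + b) (a + c) (plus_r a g) (eta X (a + b) x))"
    using Tcls_eq_iff[OF FT \<xi> \<eta>x] unfolding T_def by simp
  also have "\<dots> \<longleftrightarrow> prefix_supported X a b x"
    unfolding prefix_supported_def using Tact_Tcls_eq_Tact_eta_iff[OF F x] injm_0 by blast
  finally show ?thesis .
qed

lemma eta_eq_iff:
  assumes F: "is_inj_functor X" and x: "x \<in> fst X a" and y: "y \<in> fst X a"
  shows "eta X a x = eta X a y \<longleftrightarrow> (\<exists>c. snd X a (a + c) id x = snd X a (a + c) id y)"
proof -
  have x0: "x \<in> fst X (a + 0)" and y0: "y \<in> fst X (a + 0)" using x y by auto
  have "snd X a (a + c) (plus_r a f) z = snd X a (a + c) id z" if "z \<in> fst X a" for c f z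
    by (rule inj_functor_cong[OF F _ _ that]) (auto simp: plus_r_def intro: injmI)
  then show ?thesis unfolding eta_def Tcls_eq_iff[OF F x0 y0] using x y injm_0 by simp
qed

lemma sober_imp_injective_action:
  assumes F: "is_inj_functor X" and S: "sober X"
  shows "injective_action X"
  unfolding injective_action_def
proof (intro allI impI)
  fix n m f x y assume f: "injm n m f" and x: "x \<in> fst X n" and y: "y \<in> fst X n"
    and e: "snd X n m f x = snd X n m f y"
  obtain \<rho> where \<rho>: "injm m (n + m) \<rho>" and \<rho>f: "\<forall>j<n. \<rho> (f j) = id j"
    using injm_extend[OF f injm_id[of n n]] by blast
  have "snd X n (n + m) id x = snd X n (n + m) id y"
    using inj_functor_comp[OF F f \<rho> x, of id] inj_functor_comp[OF F f \<rho> y, of id] \<rho>f e by simp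
  then have "eta X n x = eta X n y" using eta_eq_iff[OF F x y] by blast
  then show "x = y" using S x y unfolding sober_def inj_on_def by blast
qed

lemma sober_imp_supported_descends:
  assumes F: "is_inj_functor X" and S: "sober X"
  shows "supported_descends X"
  unfolding supported_descends_def
proof (intro allI impI)
  fix a b y assume y: "y \<in> fst X (a + b)" and "prefix_supported X a b y"
  then have "Tcls X a (b, y) \<in> equalizing X a" using Tcls_in_equalizing_iff[OF F y] by blast
  then obtain z where z: "z \<in> fst X a" and "eta X a z = Tcls X a (b, y)"
    using S unfolding sober_def by (metis imageE)
  moreover have z0: "z \<in> fst X (a + 0)" using z by simp
  ultimately obtain c f g where g: "injm b c g"
    and e: "snd X (a + 0) (a + c) (plus_r a f) z = snd X (a + b) (a + c) (plus_r a g) y"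
    unfolding eta_def using Tcls_eq_iff[OF F z0 y] by blast
  have "snd X (a + b) (a + c) (plus_r a g) (snd X a (a + b) id z) = snd X a (a + c) (plus_r a f) z"
    by (rule inj_functor_comp[OF F injm_id injm_plus_r[OF g] z]) (auto simp: plus_r_def)
  then have "snd X a (a + b) id z = y"
    using injective_actionD[OF sober_imp_injective_action[OF F S] injm_plus_r[OF g]
        inj_functor_closed[OF F injm_id z] y] e by simp
  then show "\<exists>z\<in>fst X a. snd X a (a + b) id z = y" using z by blast
qed

lemma injective_supported_descends_imp_sober:
  assumes F: "is_inj_functor X" and I: "injective_action X" and P: "supported_descends X"
  shows "sober X"
  unfolding sober_def
proof (intro allI conjI)
  fix a
  show "inj_on (eta X a) (fst X a)"
  proof (rule inj_onI)
    fix x y assume x: "x \<in> fst X a" and y: "y \<in> fst X a" and "eta X a x = eta X a y"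
    then obtain c where "snd X a (a + c) id x = snd X a (a + c) id y" using eta_eq_iff[OF F x y] by blast
    then show "x = y" using injective_actionD[OF I _ x y] injm_id[of a "a + c"] by simp
  qed
  show "eta X a ` fst X a = equalizing X a"
  proof (intro equalityI subsetI)
    fix \<xi> assume "\<xi> \<in> eta X a ` fst X a"
    then obtain x where x: "x \<in> fst X (a + 0)" and "\<xi> = Tcls X a (0, x)" unfolding eta_def by auto
    then show "\<xi> \<in> equalizing X a" using Tcls_in_equalizing_iff[OF F x] prefix_supported_zero by simp
  next
    fix \<xi> assume \<xi>: "\<xi> \<in> equalizing X a"
    then obtain b x where x: "x \<in> fst X (a + b)" and \<xi>_eq: "\<xi> = Tcls X a (b, x)"
      using Tobj_obtain_rep[OF F] unfolding equalizing_def by blast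
    then obtain z where z: "z \<in> fst X a" and zx: "snd X a (a + b) id z = x"
      using P \<xi> Tcls_in_equalizing_iff[OF F x] unfolding supported_descends_def by blast
    have "snd X (a + 0) (a + b) (plus_r a id) z = snd X (a + b) (a + b) (plus_r a id) x"
      using inj_functor_ident[OF F x, of "plus_r a id"] zx
        inj_functor_cong[OF F injm_id[of a "a + b"] _ z, of "plus_r a id"]
      by (simp add: plus_r_def)
    then have "Tcls X a (0, z) = Tcls X a (b, x)"
      using Tcls_eq_iff[OF F _ x, of z 0] z injm_0 injm_id[of b b] by auto
    then show "\<xi> \<in> eta X a ` fst X a" using z \<xi>_eq unfolding eta_def by blast
  qed
qed

lemma sober_iff_injective_supported_descends:
  "is_inj_functor X \<Longrightarrow> sober X \<longleftrightarrow> injective_action X \<and> supported_descends X"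
  using sober_imp_injective_action sober_imp_supported_descends injective_supported_descends_imp_sober
  by blast

section \<open>Nominal sets\<close>

lemma inj_pullback_self:
  assumes f: "injm n m f"
  shows "inj_pullback n n m f f n id id"
  unfolding inj_pullback_def
proof (intro conjI allI impI)
  fix q u v assume h: "injm q n u \<and> injm q n v \<and> (\<forall>i<q. f (u i) = f (v i))"
  then have "\<forall>i<q. u i = v i" using injmD[OF f] injmD(1)[of q n u] injmD(1)[of q n v] by metis
  with h show "\<exists>w. injm q n w \<and> (\<forall>i<q. id (w i) = u i \<and> id (w i) = v i) \<and>
      (\<forall>w'. injm q n w' \<and> (\<forall>i<q. id (w' i) = u i \<and> id (w' i) = v i) \<longrightarrow> (\<forall>i<q. w' i = w i))"
    by (intro exI[of _ u]) auto
qed (use f in \<open>auto intro: injm_id\<close>)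

lemma inj_pullback_disjoint_renamings:
  assumes g: "injm b c g" and u: "injm b d u"
  shows "inj_pullback (a + b) (a + b) (a + c + d) (plus_r a g) (plus_r a (\<lambda>j. c + u j)) a id id"
  unfolding inj_pullback_def
proof (intro conjI allI impI)
  have gu: "g i \<noteq> c + u j" if "i < b" for i j using injmD(1)[OF g that] by simp
  fix q U V assume h: "injm q (a + b) U \<and> injm q (a + b) V \<and>
    (\<forall>i<q. plus_r a g (U i) = plus_r a (\<lambda>j. c + u j) (V i))"
  have UV: "U i < a \<and> V i = U i" if i: "i < q" for i
    using h i gu[of "U i - a" "V i - a"] injmD(1)[of q "a + b" U i]
    by (cases "U i < a"; cases "V i < a") (auto simp: plus_r_def)
  then have "injm q a U" using h unfolding injm_def inj_on_def by auto
  with UV show "\<exists>w. injm q a w \<and> (\<forall>i<q. id (w i) = U i \<and> id (w i) = V i) \<and>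
      (\<forall>w'. injm q a w' \<and> (\<forall>i<q. id (w' i) = U i \<and> id (w' i) = V i) \<longrightarrow> (\<forall>i<q. w' i = w i))"
    by (intro exI[of _ U]) auto
qed (use injm_mono[OF injm_plus_r[OF g], of a "a + c + d"] injm_plus_r[OF injm_shift[OF u, of c], of a] in
      \<open>auto intro: injm_id simp: plus_r_below add.assoc\<close>)

lemma inj_pullback_meet:
  assumes pb: "inj_pullback n m p f g k h j" and "i < n" "l < m" "f i = g l"
  shows "\<exists>t<k. h t = i"
proof -
  have "injm 1 n (\<lambda>_. i)" "injm 1 m (\<lambda>_. l)" using assms by (auto intro: injmI)
  then obtain w where "injm 1 k w" "h (w 0) = i"
    using pb assms(4) unfolding inj_pullback_def by (metis less_one)
  then show ?thesis using injmD(1) by blast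
qed

lemma nominal_imp_injective_action:
  assumes N: "nominal X"
  shows "injective_action X"
  unfolding injective_action_def
proof (intro allI impI)
  fix n m f x y assume f: "injm n m f" and x: "x \<in> fst X n" and y: "y \<in> fst X n"
    and e: "snd X n m f x = snd X n m f y"
  have "set_pullback X n n m f f n id id" using N inj_pullback_self[OF f] unfolding nominal_def by blast
  then show "x = y" using x y e unfolding set_pullback_def by auto
qed

lemma nominal_imp_supported_descends:
  assumes N: "nominal X"
  shows "supported_descends X"
  unfolding supported_descends_def
proof (intro allI impI)
  fix a b y assume y: "y \<in> fst X (a + b)" and "prefix_supported X a b y"
  then obtain c g d u where g: "injm b c g" and u: "injm b d u"
    and e: "snd X (a + b) (a + c + d) (plus_r a g) y = snd X (a + b) (a + c + d) (plus_r a (\<lambda>j. c + u j)) y"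
    unfolding prefix_supported_def by blast
  have "set_pullback X (a + b) (a + b) (a + c + d) (plus_r a g) (plus_r a (\<lambda>j. c + u j)) a id id"
    using N inj_pullback_disjoint_renamings[OF g u] unfolding nominal_def by blast
  then show "\<exists>z\<in>fst X a. snd X a (a + b) id z = y" using y e unfolding set_pullback_def by blast
qed

text \<open>Permuting the names turns \<open>h\<close> into a prefix inclusion.\<close>
lemma supported_descends_along:
  assumes F: "is_inj_functor X" and P: "supported_descends X"
    and h: "injm k n h" and x: "x \<in> fst X n"
    and L: "injm n M L" and R: "injm n M R" and agree: "\<forall>i<k. L (h i) = R (h i)"
    and apart: "\<forall>i<n. \<forall>i'<n. i \<notin> h ` {..<k} \<longrightarrow> i' \<notin> h ` {..<k} \<longrightarrow> L i \<noteq> R i'"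
    and e: "snd X n M L x = snd X n M R x"
  shows "\<exists>z\<in>fst X k. snd X k n h z = x"
proof -
  obtain b where nb: "n = k + b" using injm_le[OF h] le_Suc_ex by blast
  obtain \<sigma> \<pi> where \<sigma>: "injm n n \<sigma>" and \<pi>: "injm n n \<pi>" and \<sigma>h: "\<forall>i<k. \<sigma> i = h i"
    and \<sigma>\<pi>: "\<forall>i<n. \<sigma> (\<pi> i) = i"
    using injm_extend_to_perm[OF h] by blast
  define x' where "x' = snd X n n \<pi> x"
  have x': "x' \<in> fst X n" unfolding x'_def by (rule inj_functor_closed[OF F \<pi> x])
  have \<sigma>x': "snd X n n \<sigma> x' = x"
    unfolding x'_def using inj_functor_comp[OF F \<pi> \<sigma> x, of id] inj_functor_ident[OF F x, of id] \<sigma>\<pi> by simp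
  have outside: "\<sigma> (k + j) \<notin> h ` {..<k}" if "j < b" for j
  proof
    assume "\<sigma> (k + j) \<in> h ` {..<k}"
    then obtain t where "t < k" "\<sigma> (k + j) = \<sigma> t" using \<sigma>h by auto
    then show False using injmD(2)[OF \<sigma>, of "k + j" t] nb that by simp
  qed
  have "snd X n M (L \<circ> \<sigma>) x' = snd X n M (R \<circ> \<sigma>) x'"
    using inj_functor_comp[OF F \<sigma> L x', of "L \<circ> \<sigma>"] inj_functor_comp[OF F \<sigma> R x', of "R \<circ> \<sigma>"] \<sigma>x' e
    by simp
  moreover have "\<forall>i<k. (L \<circ> \<sigma>) i = (R \<circ> \<sigma>) i" using agree \<sigma>h by simp
  moreover have "\<forall>j<b. \<forall>j'<b. (L \<circ> \<sigma>) (k + j) \<noteq> (R \<circ> \<sigma>) (k + j')"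
  proof (intro allI impI)
    fix j j' assume "j < b" "j' < b"
    then show "(L \<circ> \<sigma>) (k + j) \<noteq> (R \<circ> \<sigma>) (k + j')"
      using apart injmD(1)[OF \<sigma>, of "k + j"] injmD(1)[OF \<sigma>, of "k + j'"] outside nb by simp
  qed
  ultimately have "prefix_supported X k b x'"
    using prefix_supportedI[OF F, of x' k b M "L \<circ> \<sigma>" "R \<circ> \<sigma>"] x' injm_comp[OF \<sigma> L] injm_comp[OF \<sigma> R] nb
    by simp
  then obtain z where z: "z \<in> fst X k" and zx': "snd X k (k + b) id z = x'"
    using P x' nb unfolding supported_descends_def by blast
  have "snd X k n h z = snd X n n \<sigma> (snd X k n id z)"
    by (rule sym, rule inj_functor_comp[OF F injm_id[OF injm_le[OF h]] \<sigma> z]) (simp add: \<sigma>h)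
  then show ?thesis using z zx' \<sigma>x' nb by auto
qed

lemma injm_push_off_image:
  assumes g: "injm m p g"
  shows "\<exists>\<psi>. injm p (p + p) \<psi> \<and> (\<forall>l<m. \<psi> (g l) = g l) \<and> (\<forall>i. i \<notin> g ` {..<m} \<longrightarrow> \<psi> i = p + i)"
proof -
  define \<psi> where "\<psi> i = (if i \<in> g ` {..<m} then i else p + i)" for i
  have "injm p (p + p) \<psi>"
  proof (rule injmI)
    fix i assume "i < p" then show "\<psi> i < p + p" by (simp add: \<psi>_def)
  next
    fix i i' assume "i < p" "i' < p" "\<psi> i = \<psi> i'"
    then show "i = i'" unfolding \<psi>_def by (auto split: if_splits)
  qed
  then show ?thesis unfolding \<psi>_def by auto
qed

lemma inj_pullback_descends:
  assumes F: "is_inj_functor X" and I: "injective_action X" and P: "supported_descends X"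
    and pb: "inj_pullback n m p f g k h j" and x: "x \<in> fst X n" and y: "y \<in> fst X m"
    and e: "snd X n p f x = snd X m p g y"
  shows "\<exists>z\<in>fst X k. snd X k n h z = x"
proof -
  have f: "injm n p f" and g: "injm m p g" and h: "injm k n h" and j: "injm k m j"
    and comm: "\<forall>i<k. f (h i) = g (j i)"
    using pb unfolding inj_pullback_def by blast+
  \<comment> \<open>\<open>\<psi>\<close> fixes the image of \<open>g\<close> and moves the rest above \<open>p\<close>, so \<open>f\<close> and \<open>\<psi> \<circ> f\<close> agree on
    the image of \<open>h\<close> (where \<open>f\<close> meets \<open>g\<close>) and are apart elsewhere.\<close>
  obtain \<psi> where \<psi>: "injm p (p + p) \<psi>" and \<psi>g: "\<forall>l<m. \<psi> (g l) = g l"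
    and \<psi>_out: "\<forall>i. i \<notin> g ` {..<m} \<longrightarrow> \<psi> i = p + i"
    using injm_push_off_image[OF g] by blast
  have pp: "injm p (p + p) id" by (rule injm_id) simp
  have "snd X n (p + p) f x = snd X p (p + p) id (snd X m p g y)"
    using inj_functor_comp[OF F f pp x, of f] e by simp
  also have "\<dots> = snd X m (p + p) g y"
    by (rule inj_functor_comp[OF F g pp y]) simp
  also have "\<dots> = snd X p (p + p) \<psi> (snd X m p g y)"
    by (rule sym, rule inj_functor_comp[OF F g \<psi> y]) (simp add: \<psi>g)
  also have "\<dots> = snd X n (p + p) (\<psi> \<circ> f) x"
    using inj_functor_comp[OF F f \<psi> x, of "\<psi> \<circ> f"] e by simp
  finally have eq: "snd X n (p + p) f x = snd X n (p + p) (\<psi> \<circ> f) x" .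
  have agree: "\<forall>i<k. f (h i) = (\<psi> \<circ> f) (h i)" using comm injmD(1)[OF j] \<psi>g by simp
  have apart: "\<forall>i<n. \<forall>i'<n. i \<notin> h ` {..<k} \<longrightarrow> i' \<notin> h ` {..<k} \<longrightarrow> f i \<noteq> (\<psi> \<circ> f) i'"
  proof (intro allI impI)
    fix i i' assume i: "i < n" and i': "i' < n" and "i' \<notin> h ` {..<k}"
    then have "f i' \<notin> g ` {..<m}" using inj_pullback_meet[OF pb i'] by blast
    then show "f i \<noteq> (\<psi> \<circ> f) i'" using injmD(1)[OF f i] \<psi>_out by simp
  qed
  show ?thesis
    by (rule supported_descends_along[OF F P h x injm_mono[OF f, of "p + p"] injm_comp[OF f \<psi>] agree apart eq])
      simp
qed

lemma injective_supported_descends_imp_nominal: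
  assumes F: "is_inj_functor X" and I: "injective_action X" and P: "supported_descends X"
  shows "nominal X"
  unfolding nominal_def set_pullback_def
proof (intro allI impI ballI)
  fix n m p f g k h j x y
  assume pb: "inj_pullback n m p f g k h j" and x: "x \<in> fst X n" and y: "y \<in> fst X m"
    and e: "snd X n p f x = snd X m p g y"
  have f: "injm n p f" and g: "injm m p g" and h: "injm k n h" and j: "injm k m j"
    and comm: "\<forall>i<k. f (h i) = g (j i)"
    using pb unfolding inj_pullback_def by blast+
  obtain z where z: "z \<in> fst X k" and hz: "snd X k n h z = x"
    using inj_pullback_descends[OF F I P pb x y e] by blast
  have "snd X m p g (snd X k m j z) = snd X k p (f \<circ> h) z"
    by (rule inj_functor_comp[OF F j g z]) (simp add: comm)
  also have "\<dots> = snd X m p g y"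
    using inj_functor_comp[OF F h f z, of "f \<circ> h"] hz e by simp
  finally have jz: "snd X k m j z = y"
    using injective_actionD[OF I g inj_functor_closed[OF F j z] y] by blast
  have unique: "z' = z" if "z' \<in> fst X k" "snd X k n h z' = x" for z'
    using injective_actionD[OF I h that(1) z] that(2) hz by simp
  show "\<exists>!z. z \<in> fst X k \<and> snd X k n h z = x \<and> snd X k m j z = y"
    using z hz jz unique by blast
qed

lemma nominal_iff_injective_supported_descends:
  "is_inj_functor X \<Longrightarrow> nominal X \<longleftrightarrow> injective_action X \<and> supported_descends X"
  using nominal_imp_injective_action nominal_imp_supported_descends
    injective_supported_descends_imp_nominal by blast

section \<open>Idempotence of D\<close>

definition equalizer_functor :: "'a psh \<Rightarrow> (nat \<Rightarrow> 'a \<Rightarrow> 'b) \<Rightarrow> (nat \<Rightarrow> 'a \<Rightarrow> 'b) \<Rightarrow> 'a psh" where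
  "equalizer_functor Y \<phi> \<psi> = ((\<lambda>n. {y \<in> fst Y n. \<phi> n y = \<psi> n y}), snd Y)"

lemma D_eq_equalizer_functor: "D X = equalizer_functor (T X) (eta (T X)) (Tmap (T X) (eta X))"
  unfolding D_def equalizer_functor_def equalizing_def T_def by simp

lemma equalizer_functor_is_functor:
  assumes "is_inj_functor Y" and "natural Y Z \<phi>" and "natural Y Z \<psi>"
  shows "is_inj_functor (equalizer_functor Y \<phi> \<psi>)"
  using assms unfolding is_inj_functor_def equalizer_functor_def natural_def by auto

lemma equalizer_injective_action:
  "injective_action Y \<Longrightarrow> injective_action (equalizer_functor Y \<phi> \<psi>)"
  unfolding injective_action_def equalizer_functor_def by auto

lemma equalizer_supported_descends:
  assumes \<phi>: "natural Y Z \<phi>" and \<psi>: "natural Y Z \<psi>" and I: "injective_action Z"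
    and P: "supported_descends Y"
  shows "supported_descends (equalizer_functor Y \<phi> \<psi>)"
  unfolding supported_descends_def
proof (intro allI impI)
  fix a b y assume y: "y \<in> fst (equalizer_functor Y \<phi> \<psi>) (a + b)"
    and "prefix_supported (equalizer_functor Y \<phi> \<psi>) a b y"
  then have y: "y \<in> fst Y (a + b)" "\<phi> (a + b) y = \<psi> (a + b) y" and "prefix_supported Y a b y"
    unfolding equalizer_functor_def prefix_supported_def by auto
  then obtain z where z: "z \<in> fst Y a" and zy: "snd Y a (a + b) id z = y"
    using P unfolding supported_descends_def by blast
  have "snd Z a (a + b) id (\<phi> a z) = snd Z a (a + b) id (\<psi> a z)"
    using naturalD(2)[OF \<phi> injm_id[OF le_add1[of a b]] z] naturalD(2)[OF \<psi> injm_id[OF le_add1[of a b]] z]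
      zy y(2) by simp
  then have "\<phi> a z = \<psi> a z"
    by (rule injective_actionD[OF I injm_id[OF le_add1[of a b]] naturalD(1)[OF \<phi> z] naturalD(1)[OF \<psi> z]])
  then show "\<exists>z\<in>fst (equalizer_functor Y \<phi> \<psi>) a. snd (equalizer_functor Y \<phi> \<psi>) a (a + b) id z = y"
    using z zy unfolding equalizer_functor_def by auto
qed

text \<open>\<open>L\<close> and \<open>R\<close> put the middle \<open>b\<close> names of \<open>x\<close> in disjoint places (below and above \<open>t\<close>), so
  \<open>x\<close> does not depend on them and they may be counted among its private names.\<close>
lemma Tcls_regroup:
  assumes F: "is_inj_functor X" and x: "x \<in> fst X (a + b + e)"
    and L: "injm (a + b + e) M L" and R: "injm (a + b + e) M R"
    and L_fix: "\<forall>i<a. L i = i" and R_fix: "\<forall>i<a. R i = i"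
    and L_low: "\<forall>i<a + b. L i < t" and R_high: "\<forall>j<b + e. t \<le> R (a + j)"
    and LR: "snd X (a + b + e) M L x = snd X (a + b + e) M R x"
  shows "Tcls X (a + b) (e, x) = Tact X a (a + b) id (Tcls X a (b + e, x))"
proof -
  obtain \<rho> where \<rho>: "injm M (a + b + M) \<rho>" and \<rho>L: "\<forall>i<a + b. \<rho> (L i) = i"
    and \<rho>_high: "\<forall>y<M. y \<notin> L ` {..<a + b} \<longrightarrow> a + b \<le> \<rho> y"
    using injm_extend[OF injm_restrict[OF L] injm_id[of "a + b" "a + b"]] by auto
  let ?G = "copair (a + b) id (\<lambda>j. \<rho> (R (a + j)))"
  have G: "injm (a + b + (b + e)) (a + b + M) ?G"
  proof (rule injm_copair_id)
    show "injm (b + e) (a + b + M) (\<lambda>j. \<rho> (R (a + j)))"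
      using injm_comp[OF injm_suffix[of a "b + e"] \<rho>] R by (simp add: add.assoc comp_def)
    show "\<forall>j<b + e. a + b \<le> \<rho> (R (a + j))"
    proof (intro allI impI)
      fix j assume j: "j < b + e"
      have "R (a + j) \<notin> L ` {..<a + b}" using L_low R_high j by (auto simp: not_less[symmetric])
      then show "a + b \<le> \<rho> (R (a + j))" using \<rho>_high injmD(1)[OF R, of "a + j"] j by simp
    qed
  qed
  have x': "x \<in> fst X (a + (b + e))" using x by (simp add: add.assoc)
  have pl: "injm (a + b + e) (a + b + (b + e)) (plus_l a (a + b) id)"
    using injm_plus_l[OF injm_id[of a "a + b"], of "b + e"] by (simp add: add.assoc)
  let ?x1 = "snd X (a + b + e) (a + b + (b + e)) (plus_l a (a + b) id) x"
  have "snd X (a + b + e) (a + b + M) (\<rho> \<circ> L) x = snd X M (a + b + M) \<rho> (snd X (a + b + e) M L x)"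
    by (rule sym, rule inj_functor_comp[OF F L \<rho> x]) simp
  also have "\<dots> = snd X (a + b + e) (a + b + M) (\<rho> \<circ> R) x"
    by (simp add: LR, rule inj_functor_comp[OF F R \<rho> x]) simp
  also have "\<dots> = snd X (a + b + (b + e)) (a + b + M) ?G ?x1"
  proof (rule sym, rule inj_functor_comp[OF F pl G x])
    fix k assume k: "k < a + b + e"
    show "?G (plus_l a (a + b) id k) = (\<rho> \<circ> R) k"
      using \<rho>L[rule_format, of k] L_fix R_fix k by (cases "k < a") (auto simp: copair_def plus_l_def)
  qed
  finally have "Tcls X (a + b) (e, x) = Tcls X (a + b) (b + e, ?x1)"
    using Tcls_eqI[OF F x inj_functor_closed[OF F pl x] injm_comp[OF L \<rho>] G] \<rho>L
    by (simp add: copair_def)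
  then show ?thesis using Tact_cls[OF F injm_id[of a "a + b"] x'] by (simp add: add.assoc)
qed

lemma T_supported_descends:
  assumes F: "is_inj_functor X"
  shows "supported_descends (T X)"
  unfolding supported_descends_def
proof (intro allI impI)
  fix a b \<xi> assume \<xi>: "\<xi> \<in> fst (T X) (a + b)" and "prefix_supported (T X) a b \<xi>"
  then obtain c g d u where g: "injm b c g" and u: "injm b d u"
    and eqT: "Tact X (a + b) (a + c + d) (plus_r a g) \<xi> = Tact X (a + b) (a + c + d) (plus_r a (\<lambda>j. c + u j)) \<xi>"
    unfolding prefix_supported_def T_def by auto
  obtain e x where x: "x \<in> fst X (a + b + e)" and \<xi>_eq: "\<xi> = Tcls X (a + b) (e, x)"
    using Tobj_obtain_rep[OF F] \<xi> unfolding T_def by (metis fst_conv)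
  define N where "N = a + c + d"
  define G where "G = plus_r a g"
  define U where "U = plus_r a (\<lambda>j. c + u j)"
  have G: "injm (a + b) N G" using injm_mono[OF injm_plus_r[OF g, of a]] unfolding G_def N_def by simp
  have U: "injm (a + b) N U"
    using injm_plus_r[OF injm_shift[OF u, of c], of a] unfolding U_def N_def by (simp add: add.assoc)
  obtain K v1 v2 where v1: "injm e K v1" and v2: "injm e K v2"
    and LR: "snd X (a + b + e) (N + K) (plus_r N v1 \<circ> plus_l (a + b) N G) x =
      snd X (a + b + e) (N + K) (plus_r N v2 \<circ> plus_l (a + b) N U) x"
    using eqT unfolding \<xi>_eq N_def[symmetric] G_def[symmetric] U_def[symmetric] Tact_Tcls_eq_iff[OF F G U x x]
    by blast
  have L: "injm (a + b + e) (N + K) (plus_r N v1 \<circ> plus_l (a + b) N G)"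
    and R: "injm (a + b + e) (N + K) (plus_r N v2 \<circ> plus_l (a + b) N U)"
    by (rule injm_comp[OF injm_plus_l[OF G] injm_plus_r[OF v1]],
        rule injm_comp[OF injm_plus_l[OF U] injm_plus_r[OF v2]])
  have "\<forall>i<a + b. (plus_r N v1 \<circ> plus_l (a + b) N G) i < a + c"
  proof (intro allI impI)
    fix i assume "i < a + b"
    then have "i < a \<or> i - a < b" by linarith
    then show "(plus_r N v1 \<circ> plus_l (a + b) N G) i < a + c"
      using injmD(1)[OF g, of "i - a"] unfolding G_def N_def by (auto simp: plus_l_def plus_r_def)
  qed
  moreover have "\<forall>j<b + e. a + c \<le> (plus_r N v2 \<circ> plus_l (a + b) N U) (a + j)"
    unfolding U_def N_def by (auto simp: plus_l_def plus_r_def)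
  ultimately have "\<xi> = Tact X a (a + b) id (Tcls X a (b + e, x))"
    using Tcls_regroup[OF F x L R _ _ _ _ LR] \<xi>_eq unfolding G_def U_def N_def
    by (simp add: plus_l_def plus_r_def)
  moreover have "Tcls X a (b + e, x) \<in> Tobj X a" using Tcls_in_Tobj[of x X a "b + e"] x by (simp add: add.assoc)
  ultimately show "\<exists>z\<in>fst (T X) a. snd (T X) a (a + b) id z = \<xi>" unfolding T_def by auto
qed

lemma D_functor:
  assumes F: "is_inj_functor X"
  shows "is_inj_functor (D X)"
proof -
  have FT: "is_inj_functor (T X)" by (rule T_functor[OF F])
  show ?thesis unfolding D_eq_equalizer_functor
    by (rule equalizer_functor_is_functor[OF FT eta_natural[OF FT] Tmap_natural[OF F FT eta_natural[OF F]]])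
qed

lemma D_sober:
  assumes F: "is_inj_functor X"
  shows "sober (D X)"
proof -
  have FT: "is_inj_functor (T X)" by (rule T_functor[OF F])
  have \<eta>: "natural (T X) (T (T X)) (eta (T X))" by (rule eta_natural[OF FT])
  have T\<eta>: "natural (T X) (T (T X)) (Tmap (T X) (eta X))" by (rule Tmap_natural[OF F FT eta_natural[OF F]])
  have "injective_action (D X)"
    unfolding D_eq_equalizer_functor by (rule equalizer_injective_action[OF T_injective_action[OF F]])
  moreover have "supported_descends (D X)"
    unfolding D_eq_equalizer_functor
    by (rule equalizer_supported_descends[OF \<eta> T\<eta> T_injective_action[OF FT] T_supported_descends[OF F]])
  ultimately show ?thesis using sober_iff_injective_supported_descends[OF D_functor[OF F]] by blast
qed

lemma mD_eta:
  assumes F: "is_inj_functor X" and \<xi>: "\<xi> \<in> fst (D X) a"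
  shows "mD X a (eta (D X) a \<xi>) = \<xi>"
proof -
  have "natural (D X) (T X) (\<lambda>n \<xi>. \<xi>)"
    unfolding natural_def D_def T_def equalizing_def by auto
  then have "Tmap (T X) (\<lambda>n \<xi>. \<xi>) a (eta (D X) a \<xi>) = Tcls (T X) a (0, \<xi>)"
    unfolding eta_def using Tmap_cls[OF D_functor[OF F] T_functor[OF F], of "\<lambda>n \<xi>. \<xi>" \<xi> a 0] \<xi> by simp
  moreover have "\<xi> \<in> Tobj X a" using \<xi> unfolding D_def equalizing_def by simp
  then obtain b x where x: "x \<in> fst X (a + b)" and \<xi>_eq: "\<xi> = Tcls X a (b, x)"
    using Tobj_obtain_rep[OF F] by metis
  ultimately show ?thesis
    unfolding mD_def using mu_cls[OF F, where c = 0] x \<xi>_eq by simp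
qed

theorem corollary9p7:
  fixes X :: "'a psh"
  assumes "is_inj_functor X"
  shows "(sober X \<longleftrightarrow> nominal X) \<and>
         (\<forall>a. bij_betw (mD X a) (fst (D (D X)) a) (fst (D X) a))"
proof (intro conjI allI)
  show "sober X \<longleftrightarrow> nominal X"
    using sober_iff_injective_supported_descends[OF assms]
      nominal_iff_injective_supported_descends[OF assms] by blast
  fix a
  have \<eta>_onto: "eta (D X) a ` fst (D X) a = fst (D (D X)) a"
    using D_sober[OF assms] unfolding sober_def by (simp add: D_def)
  show "bij_betw (mD X a) (fst (D (D X)) a) (fst (D X) a)"
  proof (rule bij_betw_byWitness[where f' = "eta (D X) a"])
    show "\<forall>\<zeta>\<in>fst (D (D X)) a. eta (D X) a (mD X a \<zeta>) = \<zeta>"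
      and "mD X a ` fst (D (D X)) a \<subseteq> fst (D X) a"
      unfolding \<eta>_onto[symmetric] using mD_eta[OF assms] by auto
    show "\<forall>\<xi>\<in>fst (D X) a. mD X a (eta (D X) a \<xi>) = \<xi>" using mD_eta[OF assms] by blast
    show "eta (D X) a ` fst (D X) a \<subseteq> fst (D (D X)) a" using \<eta>_onto by simp
  qed
qed
end
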